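(* Let $G\in\mathcal{V}_{\sigma\ell\mathbb{G}_u}$. Then the interpretation of the constant $1$ in $G$ is a weak unit of the $\ell$-group $G$, i.e. $1\ge0$ and for all $f\in G$, $f\wedge1=0$ implies $f=0$.
   Context: $\mathcal{V}_{\sigma\ell\mathbb{G}_u}$ is the infinitary variety of algebras $(G,0,+,-,\vee,\wedge,\bigvee^-,1)$, with $\bigvee^-$ of countably infinite arity ($\bigvee_{n\ge1}^g f_n:=\bigvee^-(g,f_1,f_2,\dots)$) and $1$ a constant, satisfying the $\ell$-group axioms, (A1) $\bigvee_{n\ge1}^g f_n=\bigvee_{n\ge1}^g(f_n\wedge g)$; (A2) $\bigvee_{n\ge1}^g f_n=(f_1\wedge g)\vee\bigvee^-(g,f_2,f_3,\dots)$; (A3) $\bigvee_{n\ge1}^g(f_n\wedge h)\le h$ ($a\le b$ meaning $a\wedge b=a$); and $\bigvee_{n\ge1}^{|f|}(|f|\wedge n1)=|f|$ for all $f$. *)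

theory Defs
  imports Main
begin

text \<open>The countably infinitary operation is
  bv g f  =  bigvee(g, f 1, f 2, ...)   where the sequence f_1, f_2, ... is
represented by f 0, f 1, ... (index shift by one).\<close>

definition lgroup ::
  "'a \<Rightarrow> ('a \<Rightarrow> 'a \<Rightarrow> 'a) \<Rightarrow> ('a \<Rightarrow> 'a) \<Rightarrow> ('a \<Rightarrow> 'a \<Rightarrow> 'a) \<Rightarrow> ('a \<Rightarrow> 'a \<Rightarrow> 'a) \<Rightarrow> bool"
where
  "lgroup z pl ng jn mt \<longleftrightarrow>
     (\<forall>a b c. pl (pl a b) c = pl a (pl b c)) \<and>
     (\<forall>a b. pl a b = pl b a) \<and>
     (\<forall>a. pl z a = a) \<and>
     (\<forall>a. pl (ng a) a = z) \<and>
     (\<forall>a b. jn a b = jn b a) \<and> (\<forall>a b. mt a b = mt b a) \<and>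
     (\<forall>a b c. jn (jn a b) c = jn a (jn b c)) \<and>
     (\<forall>a b c. mt (mt a b) c = mt a (mt b c)) \<and>
     (\<forall>a b. jn a (mt a b) = a) \<and> (\<forall>a b. mt a (jn a b) = a) \<and>
     (\<forall>a b c. pl a (jn b c) = jn (pl a b) (pl a c))"

definition lle :: "('a \<Rightarrow> 'a \<Rightarrow> 'a) \<Rightarrow> 'a \<Rightarrow> 'a \<Rightarrow> bool" where
  "lle mt a b \<longleftrightarrow> mt a b = a"

definition labs :: "('a \<Rightarrow> 'a) \<Rightarrow> ('a \<Rightarrow> 'a \<Rightarrow> 'a) \<Rightarrow> 'a \<Rightarrow> 'a" where
  "labs ng jn f = jn f (ng f)"

fun nmul :: "'a \<Rightarrow> ('a \<Rightarrow> 'a \<Rightarrow> 'a) \<Rightarrow> nat \<Rightarrow> 'a \<Rightarrow> 'a" where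
  "nmul z pl 0 a = z"
| "nmul z pl (Suc n) a = pl (nmul z pl n a) a"

definition sigma_lgu ::
  "'a \<Rightarrow> ('a \<Rightarrow> 'a \<Rightarrow> 'a) \<Rightarrow> ('a \<Rightarrow> 'a) \<Rightarrow> ('a \<Rightarrow> 'a \<Rightarrow> 'a) \<Rightarrow> ('a \<Rightarrow> 'a \<Rightarrow> 'a)
   \<Rightarrow> ('a \<Rightarrow> (nat \<Rightarrow> 'a) \<Rightarrow> 'a) \<Rightarrow> 'a \<Rightarrow> bool"
where
  "sigma_lgu z pl ng jn mt bv one \<longleftrightarrow>
     lgroup z pl ng jn mt \<and>
     (\<forall>g f. bv g f = bv g (\<lambda>n. mt (f n) g)) \<and>
     (\<forall>g f. bv g f = jn (mt (f 0) g) (bv g (\<lambda>n. f (Suc n)))) \<and>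
     (\<forall>g f h. lle mt (bv g (\<lambda>n. mt (f n) h)) h) \<and>
     (\<forall>f. bv (labs ng jn f) (\<lambda>n. mt (labs ng jn f) (nmul z pl (Suc n) one)) = labs ng jn f)"

end

theory Submission
  imports Defs
begin

text \<open>Let \<open>q = (-1) \<squnion> 0\<close>, the negative part of \<open>1\<close>. Since \<open>q\<close> is disjoint from the
positive part \<open>1\<^sup>+\<close>, it is disjoint from every multiple \<open>n1\<^sup>+ \<ge> n1\<close>, so all terms of the
supremum \<open>\<Or>\<^sup>q (q \<sqinter> n1) = q\<close> given by the last axiom lie below \<open>0\<close>; axiom (A3) then forces
\<open>q \<le> 0\<close>, i.e. \<open>1 \<ge> 0\<close>. If \<open>f \<sqinter> 1 = 0\<close>, then \<open>f \<ge> 0\<close> and, as \<open>1 \<ge> 0\<close>, \<open>f \<sqinter> n1 = 0\<close> for all \<open>n\<close>; the same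
argument gives \<open>f = 0\<close>.\<close>

locale lattice_group =
  fixes z :: 'a and pl :: "'a \<Rightarrow> 'a \<Rightarrow> 'a" (infixl "\<oplus>" 65) and ng :: "'a \<Rightarrow> 'a"
    and jn :: "'a \<Rightarrow> 'a \<Rightarrow> 'a" (infixl "\<squnion>" 60) and mt :: "'a \<Rightarrow> 'a \<Rightarrow> 'a" (infixl "\<sqinter>" 61)
  assumes lgroup: "lgroup z pl ng jn mt"
begin

abbreviation le_lg :: "'a \<Rightarrow> 'a \<Rightarrow> bool" (infix "\<preceq>" 50) where
  "a \<preceq> b \<equiv> lle mt a b"

lemma
  shows lg_add_assoc: "(a \<oplus> b) \<oplus> c = a \<oplus> (b \<oplus> c)"
    and lg_add_commute: "a \<oplus> b = b \<oplus> a"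
    and lg_zero_add: "z \<oplus> a = a"
    and lg_neg_add: "ng a \<oplus> a = z"
    and lg_join_commute: "a \<squnion> b = b \<squnion> a"
    and lg_meet_commute: "a \<sqinter> b = b \<sqinter> a"
    and lg_join_assoc: "(a \<squnion> b) \<squnion> c = a \<squnion> (b \<squnion> c)"
    and lg_meet_assoc: "(a \<sqinter> b) \<sqinter> c = a \<sqinter> (b \<sqinter> c)"
    and lg_join_meet_absorb: "a \<squnion> (a \<sqinter> b) = a"
    and lg_meet_join_absorb: "a \<sqinter> (a \<squnion> b) = a"
    and lg_add_join_distrib: "a \<oplus> (b \<squnion> c) = (a \<oplus> b) \<squnion> (a \<oplus> c)"
  using lgroup unfolding lgroup_def by auto

lemma lg_add_zero: "a \<oplus> z = a"
  by (metis lg_add_commute lg_zero_add)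

lemma lg_add_neg: "a \<oplus> ng a = z"
  by (metis lg_add_commute lg_neg_add)

lemma lg_add_left_cancel: "c \<oplus> a = c \<oplus> b \<Longrightarrow> a = b"
  by (metis lg_add_assoc lg_zero_add lg_neg_add)

lemma lg_neg_neg: "ng (ng a) = a"
  by (metis lg_add_left_cancel lg_neg_add lg_add_neg)

lemma lg_neg_add_distrib: "ng (a \<oplus> b) = ng a \<oplus> ng b"
  by (metis lg_add_assoc lg_add_commute lg_add_left_cancel lg_add_zero lg_add_neg)

lemma lg_neg_zero: "ng z = z"
  by (metis lg_add_zero lg_neg_add)

lemma lg_meet_idem: "a \<sqinter> a = a"
  by (metis lg_join_meet_absorb lg_meet_join_absorb)

lemma lg_le_iff_join: "a \<preceq> b \<longleftrightarrow> a \<squnion> b = b"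
  unfolding lle_def
  by (metis lg_join_commute lg_meet_commute lg_join_meet_absorb lg_meet_join_absorb)

lemma lg_le_refl: "a \<preceq> a"
  unfolding lle_def by (rule lg_meet_idem)

lemma lg_le_trans: "a \<preceq> b \<Longrightarrow> b \<preceq> c \<Longrightarrow> a \<preceq> c"
  unfolding lle_def by (metis lg_meet_assoc)

lemma lg_le_antisym: "a \<preceq> b \<Longrightarrow> b \<preceq> a \<Longrightarrow> a = b"
  unfolding lle_def by (metis lg_meet_commute)

lemma lg_meet_le1: "a \<sqinter> b \<preceq> a"
  unfolding lle_def by (metis lg_meet_commute lg_meet_assoc lg_meet_idem)

lemma lg_meet_le2: "a \<sqinter> b \<preceq> b"
  unfolding lle_def by (metis lg_meet_assoc lg_meet_idem)

lemma lg_meet_greatest: "c \<preceq> a \<Longrightarrow> c \<preceq> b \<Longrightarrow> c \<preceq> a \<sqinter> b"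
  unfolding lle_def by (metis lg_meet_assoc)

lemma lg_join_ge1: "a \<preceq> a \<squnion> b"
  unfolding lg_le_iff_join by (metis lg_join_assoc lg_join_meet_absorb lg_meet_join_absorb)

lemma lg_join_ge2: "b \<preceq> a \<squnion> b"
  using lg_join_ge1 lg_join_commute by metis

lemma lg_join_least: "a \<preceq> c \<Longrightarrow> b \<preceq> c \<Longrightarrow> a \<squnion> b \<preceq> c"
  unfolding lg_le_iff_join by (metis lg_join_assoc)

lemma lg_add_left_mono: "a \<preceq> b \<Longrightarrow> c \<oplus> a \<preceq> c \<oplus> b"
  unfolding lg_le_iff_join by (metis lg_add_join_distrib)

lemma lg_add_right_mono: "a \<preceq> b \<Longrightarrow> a \<oplus> c \<preceq> b \<oplus> c"
  using lg_add_left_mono lg_add_commute by metis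

lemma lg_add_mono: "a \<preceq> b \<Longrightarrow> c \<preceq> d \<Longrightarrow> a \<oplus> c \<preceq> b \<oplus> d"
  by (meson lg_le_trans lg_add_left_mono lg_add_right_mono)

lemma lg_add_nonneg: "z \<preceq> a \<Longrightarrow> z \<preceq> b \<Longrightarrow> z \<preceq> a \<oplus> b"
  using lg_add_mono lg_zero_add by metis

lemma lg_neg_antimono: "a \<preceq> b \<Longrightarrow> ng b \<preceq> ng a"
proof -
  assume "a \<preceq> b"
  then have "ng b \<oplus> ng a \<oplus> a \<preceq> ng b \<oplus> ng a \<oplus> b"
    by (rule lg_add_left_mono)
  then show ?thesis
    by (metis lg_add_assoc lg_add_commute lg_neg_add lg_add_zero)
qed

lemma lg_neg_join: "ng (a \<squnion> b) = ng a \<sqinter> ng b"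
proof (rule lg_le_antisym)
  show "ng (a \<squnion> b) \<preceq> ng a \<sqinter> ng b"
    by (intro lg_meet_greatest lg_neg_antimono lg_join_ge1 lg_join_ge2)
  have "a \<squnion> b \<preceq> ng (ng a \<sqinter> ng b)"
    by (metis lg_join_least lg_neg_antimono lg_meet_le1 lg_meet_le2 lg_neg_neg)
  then show "ng a \<sqinter> ng b \<preceq> ng (a \<squnion> b)"
    by (metis lg_neg_antimono lg_neg_neg)
qed

lemma lg_add_meet_distrib: "a \<oplus> (b \<sqinter> c) = (a \<oplus> b) \<sqinter> (a \<oplus> c)"
proof -
  have "a \<oplus> (b \<sqinter> c) = ng (ng a \<oplus> (ng b \<squnion> ng c))"
    by (metis lg_neg_join lg_neg_neg lg_neg_add_distrib)
  also have "\<dots> = ng ((ng a \<oplus> ng b) \<squnion> (ng a \<oplus> ng c))"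
    by (simp add: lg_add_join_distrib)
  also have "\<dots> = (a \<oplus> b) \<sqinter> (a \<oplus> c)"
    by (metis lg_neg_join lg_neg_add_distrib lg_neg_neg)
  finally show ?thesis .
qed

lemma lg_meet_add_le:
  assumes "z \<preceq> a" "z \<preceq> b" "z \<preceq> c"
  shows "c \<sqinter> (a \<oplus> b) \<preceq> (c \<sqinter> a) \<oplus> (c \<sqinter> b)"
proof -
  have expand: "(c \<sqinter> a) \<oplus> (c \<sqinter> b) = ((c \<oplus> c) \<sqinter> (c \<oplus> b)) \<sqinter> ((a \<oplus> c) \<sqinter> (a \<oplus> b))"
    by (metis lg_add_meet_distrib lg_add_commute)
  have "c \<preceq> c \<oplus> c" "c \<preceq> c \<oplus> b" "c \<preceq> a \<oplus> c"
    using lg_add_left_mono[OF assms(3), of c] lg_add_left_mono[OF assms(2), of c]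
      lg_add_right_mono[OF assms(1), of c]
    by (simp_all add: lg_add_zero lg_zero_add)
  then have "c \<sqinter> (a \<oplus> b) \<preceq> ((c \<oplus> c) \<sqinter> (c \<oplus> b)) \<sqinter> ((a \<oplus> c) \<sqinter> (a \<oplus> b))"
    by (meson lg_le_trans lg_meet_greatest lg_meet_le1 lg_meet_le2)
  then show ?thesis
    by (simp add: expand)
qed

lemma lg_disjoint_add:
  assumes "z \<preceq> a" "z \<preceq> b" "z \<preceq> c" "c \<sqinter> a = z" "c \<sqinter> b = z"
  shows "c \<sqinter> (a \<oplus> b) = z"
proof (rule lg_le_antisym)
  show "c \<sqinter> (a \<oplus> b) \<preceq> z"
    using lg_meet_add_le[OF assms(1-3)] assms(4,5) lg_zero_add by metis
  show "z \<preceq> c \<sqinter> (a \<oplus> b)"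
    using assms(1-3) lg_add_nonneg lg_meet_greatest by blast
qed

lemma lg_nmul_nonneg: "z \<preceq> a \<Longrightarrow> z \<preceq> nmul z pl n a"
  by (induction n) (simp_all add: lg_le_refl lg_add_nonneg)

lemma lg_nmul_mono: "a \<preceq> b \<Longrightarrow> nmul z pl n a \<preceq> nmul z pl n b"
  by (induction n) (simp_all add: lg_le_refl lg_add_mono)

lemma lg_disjoint_nmul:
  assumes "z \<preceq> a" "z \<preceq> c" "c \<sqinter> a = z"
  shows "c \<sqinter> nmul z pl n a = z"
proof (induction n)
  case 0
  then show ?case
    using assms(2) unfolding lle_def by (simp add: lg_meet_commute)
next
  case (Suc n)
  then show ?case
    using lg_disjoint_add[OF lg_nmul_nonneg[OF assms(1)] assms(1,2)] assms(3) by simp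
qed

lemma lg_pos_part_neg_part_disjoint: "(a \<squnion> z) \<sqinter> (ng a \<squnion> z) = z"
proof -
  have neg_part: "ng (ng a \<squnion> z) = a \<sqinter> z"
    by (metis lg_neg_join lg_neg_neg lg_neg_zero)
  have riesz: "(a \<squnion> z) \<oplus> (a \<sqinter> z) = a"
  proof -
    have "a \<oplus> ng (a \<squnion> z) = a \<sqinter> z"
      by (metis lg_neg_join lg_neg_zero lg_add_meet_distrib lg_add_neg lg_add_zero lg_meet_commute)
    then show ?thesis
      by (metis lg_add_assoc lg_add_commute lg_neg_add lg_add_zero)
  qed
  have "((a \<squnion> z) \<sqinter> (ng a \<squnion> z)) \<oplus> ng (ng a \<squnion> z)
      = ((a \<squnion> z) \<oplus> ng (ng a \<squnion> z)) \<sqinter> ((ng a \<squnion> z) \<oplus> ng (ng a \<squnion> z))"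
    by (metis lg_add_meet_distrib lg_add_commute)
  also have "\<dots> = a \<sqinter> z"
    by (simp only: lg_add_neg, simp only: neg_part riesz lg_add_zero lg_meet_commute)
  also have "\<dots> = z \<oplus> ng (ng a \<squnion> z)"
    by (simp add: neg_part lg_zero_add)
  finally show ?thesis
    by (metis lg_add_commute lg_add_left_cancel)
qed

lemma lg_labs_nonneg: "z \<preceq> a \<Longrightarrow> labs ng jn a = a"
proof -
  assume nonneg: "z \<preceq> a"
  then have "ng a \<preceq> a"
    using lg_neg_antimono lg_neg_zero lg_le_trans by metis
  then show ?thesis
    unfolding labs_def using lg_le_iff_join lg_join_commute by metis
qed

end

locale sigma_lgu_algebra = lattice_group +
  fixes bv :: "'a \<Rightarrow> (nat \<Rightarrow> 'a) \<Rightarrow> 'a" and one :: 'a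
  assumes sigma_lgu: "sigma_lgu z pl ng jn mt bv one"
begin

lemma bv_meet_le: "bv g (\<lambda>n. f n \<sqinter> h) \<preceq> h"
  using sigma_lgu unfolding sigma_lgu_def by blast

lemma bv_unit_multiples: "bv (labs ng jn f) (\<lambda>n. labs ng jn f \<sqinter> nmul z pl (Suc n) one) = labs ng jn f"
  using sigma_lgu unfolding sigma_lgu_def by blast

lemma nonneg_eq_zero_if_meet_multiples_nonpos:
  assumes "z \<preceq> g" and "\<And>n. g \<sqinter> nmul z pl (Suc n) one \<preceq> z"
  shows "g = z"
proof -
  have "bv g (\<lambda>n. g \<sqinter> nmul z pl (Suc n) one) = g"
    using bv_unit_multiples[of g] lg_labs_nonneg[OF assms(1)] by simp
  moreover have "(\<lambda>n. g \<sqinter> nmul z pl (Suc n) one) = (\<lambda>n. (g \<sqinter> nmul z pl (Suc n) one) \<sqinter> z)"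
    using assms(2) unfolding lle_def by simp
  ultimately have "g \<preceq> z"
    using bv_meet_le by metis
  then show ?thesis
    using assms(1) lg_le_antisym by blast
qed

lemma one_nonneg: "z \<preceq> one"
proof -
  define p where "p = one \<squnion> z"
  define q where "q = ng one \<squnion> z"
  have q_nonneg: "z \<preceq> q" and p_nonneg: "z \<preceq> p"
    unfolding p_def q_def by (simp_all add: lg_join_ge2)
  have "q \<sqinter> p = z"
    unfolding p_def q_def using lg_pos_part_neg_part_disjoint lg_meet_commute by metis
  then have disj: "q \<sqinter> nmul z pl n p = z" for n
    using lg_disjoint_nmul[OF p_nonneg q_nonneg] by blast
  have "q \<sqinter> nmul z pl (Suc n) one \<preceq> z" for n
  proof -
    have "nmul z pl (Suc n) one \<preceq> nmul z pl (Suc n) p"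
      unfolding p_def by (intro lg_nmul_mono lg_join_ge1)
    then show ?thesis
      using disj[of "Suc n"] by (metis lg_le_trans lg_meet_greatest lg_meet_le1 lg_meet_le2)
  qed
  then have "q = z"
    by (rule nonneg_eq_zero_if_meet_multiples_nonpos[OF q_nonneg])
  then have "ng one \<preceq> z"
    using lg_join_ge1[of "ng one" z] by (simp add: q_def)
  then show ?thesis
    using lg_neg_antimono lg_neg_neg lg_neg_zero by metis
qed

lemma disjoint_one_eq_zero:
  assumes "f \<sqinter> one = z"
  shows "f = z"
proof -
  have f_nonneg: "z \<preceq> f"
    using lg_meet_le1[of f one] assms by simp
  have "f \<sqinter> nmul z pl (Suc n) one = z" for n
    using lg_disjoint_nmul[OF one_nonneg f_nonneg] assms by blast
  then have "f \<sqinter> nmul z pl (Suc n) one \<preceq> z" for n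
    by (simp only: lg_le_refl)
  then show ?thesis
    by (rule nonneg_eq_zero_if_meet_multiples_nonpos[OF f_nonneg])
qed

end

theorem mainTheorem7:
  fixes z :: 'a and pl :: "'a \<Rightarrow> 'a \<Rightarrow> 'a" and ng :: "'a \<Rightarrow> 'a"
    and jn mt :: "'a \<Rightarrow> 'a \<Rightarrow> 'a" and bv :: "'a \<Rightarrow> (nat \<Rightarrow> 'a) \<Rightarrow> 'a" and one :: 'a
  assumes "sigma_lgu z pl ng jn mt bv one"
  shows "lle mt z one \<and> (\<forall>f. mt f one = z \<longrightarrow> f = z)"
proof -
  have "lgroup z pl ng jn mt"
    using assms unfolding sigma_lgu_def by blast
  then interpret sigma_lgu_algebra z pl ng jn mt bv one
    using assms by (intro sigma_lgu_algebra.intro lattice_group.intro sigma_lgu_algebra_axioms.intro)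
  show ?thesis
    using one_nonneg disjoint_one_eq_zero by blast
qed

end
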